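(* Let $G$ be a finite nilpotent group. Then $P(G)$ is a cograph if and only if either $|G|$ is a power of a prime, or $G$ is cyclic of order $pq$ for distinct primes $p$ and $q$.
   Context: The power graph $P(G)$ of a group $G$ has vertex set $G$, with distinct $u,v$ adjacent if and only if $u=v^i$ or $v=u^j$ for some integers $i,j$. A cograph is a graph with no induced subgraph isomorphic to the path $P_4$ on four vertices. *)

theory Defs
  imports "HOL-Algebra.Algebra" "HOL-Computational_Algebra.Primes"
begin

definition lower_central_step :: "('a, 'b) monoid_scheme \<Rightarrow> 'a set \<Rightarrow> 'a set" where
  "lower_central_step G H =
     generate G {h \<otimes>\<^bsub>G\<^esub> g \<otimes>\<^bsub>G\<^esub> inv\<^bsub>G\<^esub> h \<otimes>\<^bsub>G\<^esub> inv\<^bsub>G\<^esub> g | h g. h \<in> H \<and> g \<in> carrier G}"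

definition nilpotent_group :: "('a, 'b) monoid_scheme \<Rightarrow> bool" where
  "nilpotent_group G \<longleftrightarrow> group G \<and>
     (\<exists>n. (lower_central_step G ^^ n) (carrier G) = {\<one>\<^bsub>G\<^esub>})"

definition power_adj :: "('a, 'b) monoid_scheme \<Rightarrow> 'a \<Rightarrow> 'a \<Rightarrow> bool" where
  "power_adj G u v \<longleftrightarrow> u \<in> carrier G \<and> v \<in> carrier G \<and> u \<noteq> v \<and>
     ((\<exists>i::int. u = v [^]\<^bsub>G\<^esub> i) \<or> (\<exists>j::int. v = u [^]\<^bsub>G\<^esub> j))"

definition cograph :: "'a set \<Rightarrow> ('a \<Rightarrow> 'a \<Rightarrow> bool) \<Rightarrow> bool" where
  "cograph V E \<longleftrightarrow> \<not> (\<exists>a\<in>V. \<exists>b\<in>V. \<exists>c\<in>V. \<exists>d\<in>V.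
      distinct [a, b, c, d] \<and> E a b \<and> E b c \<and> E c d \<and>
      \<not> E a c \<and> \<not> E b d \<and> \<not> E a d)"

definition power_graph_is_cograph :: "('a, 'b) monoid_scheme \<Rightarrow> bool" where
  "power_graph_is_cograph G \<longleftrightarrow> cograph (carrier G) (power_adj G)"

end

theory Submission
  imports Defs
begin

(*
  Write u \<le> v when u is a power of v; the power graph is the comparability graph of this
  preorder. In a cyclic group generated by z of order n, z^i \<le> z^j iff gcd j n divides gcd i n.
  If |G| is a prime power these labels are powers of p, so the elements below a given one form a
  chain, and the comparability graph of such a "tree order" has no induced P4. If G is cyclic of
  order pq, the labels are divisors of pq and the only incomparable ones are p and q, so any two
  elements incomparable to a common third one are equivalent; this again excludes an induced P4.

  Conversely, in a nilpotent group elements x, y of coprime orders commute: by induction their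
  commutator lies in every term of the lower central series, because modulo the next term it is
  central, and a central commutator [x,y] has order dividing both ord x and ord y. Hence a nilpotent
  group of order pq is cyclic. If three primes p, q, r divide |G|, elements x, y, z of these orders
  give the induced path x - xy - y - yz. If p^2 q divides |G|, take y of order q and a subgroup P
  of order p^2: either P has an element w of order p^2, giving w - w^p - w^p y - y, or it contains
  two elements x, x' of order p generating different subgroups, giving x - xy - y - x'y.
*)

definition power_of :: "('a, 'b) monoid_scheme \<Rightarrow> 'a \<Rightarrow> 'a \<Rightarrow> bool" where
  "power_of G u v \<longleftrightarrow> (\<exists>i::int. u = v [^]\<^bsub>G\<^esub> i)"

definition commutator :: "('a, 'b) monoid_scheme \<Rightarrow> 'a \<Rightarrow> 'a \<Rightarrow> 'a" where
  "commutator G x y = x \<otimes>\<^bsub>G\<^esub> y \<otimes>\<^bsub>G\<^esub> inv\<^bsub>G\<^esub> x \<otimes>\<^bsub>G\<^esub> inv\<^bsub>G\<^esub> y"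

lemma lower_central_step_eq:
  "lower_central_step G H = generate G {commutator G h g | h g. h \<in> H \<and> g \<in> carrier G}"
  unfolding lower_central_step_def commutator_def ..

lemma card_gt_1_obtains_other:
  assumes "1 < card A"
  obtains a where "a \<in> A" and "a \<noteq> x"
proof -
  have "\<not> A \<subseteq> {x}"
    using assms card_mono[of "{x}" A] by auto
  then show thesis
    using that by blast
qed

lemma prime_dvd_prime_iff:
  fixes p q :: nat
  assumes "Factorial_Ring.prime p" and "Factorial_Ring.prime q"
  shows "p dvd q \<longleftrightarrow> p = q"
  using primes_dvd_imp_eq[OF assms] by auto

lemma prime_power_divisors_comparable:
  fixes p :: "'a :: factorial_semiring_multiplicative"
  assumes "Factorial_Ring.prime p" and "a dvd p ^ n" and "b dvd p ^ n"
  shows "a dvd b \<or> b dvd a"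
proof -
  obtain k l where "normalize a = p ^ k" and "normalize b = p ^ l"
    using divides_primepow[OF assms(1,2)] divides_primepow[OF assms(1,3)] by metis
  then show ?thesis
    by (metis dvd_normalize_iff normalize_dvd_iff le_imp_power_dvd nat_le_linear)
qed

lemma divisors_of_prime_product:
  fixes p q d :: nat
  assumes "Factorial_Ring.prime p" and "Factorial_Ring.prime q" and "d dvd p * q"
  shows "d \<in> {1, p, q, p * q}"
proof (cases "p dvd d")
  case True
  then obtain e where d: "d = p * e" by (auto elim: dvdE)
  with assms have "e dvd q"
    using prime_gt_0_nat by auto
  then show ?thesis using d \<open>Factorial_Ring.prime q\<close> prime_nat_iff by auto
next
  case False
  with assms have "d dvd q"
    by (metis coprime_commute coprime_dvd_mult_right_iff prime_imp_coprime)
  then show ?thesis using \<open>Factorial_Ring.prime q\<close> prime_nat_iff by auto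
qed

lemma gcd_prime_product_cases:
  fixes p q :: nat
  assumes "Factorial_Ring.prime p" and "Factorial_Ring.prime q"
  shows "gcd i (int p * int q) \<in> {1, int p, int q, int p * int q}"
proof -
  obtain d where d: "gcd i (int p * int q) = int d"
    using nonneg_int_cases[OF gcd_ge_0_int] by blast
  have "int d dvd int (p * q)"
    unfolding d[symmetric] by simp
  then have "d \<in> {1, p, q, p * q}"
    by (simp only: of_nat_dvd_iff divisors_of_prime_product[OF assms])
  then show ?thesis
    unfolding d by auto
qed

lemma prime_product_divisors_incomparable:
  fixes p q a b :: int
  assumes "\<not> p dvd q" "\<not> q dvd p" and "a \<in> {1, p, q, p * q}" "b \<in> {1, p, q, p * q}"
    and "\<not> a dvd b" "\<not> b dvd a"
  shows "(a = p \<and> b = q) \<or> (a = q \<and> b = p)"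
  using assms(3-6) by (elim insertE singletonE emptyE) (simp_all add: assms(1,2))

lemma not_prime_power_cases:
  fixes n :: nat
  assumes "n > 0" and not_prime_power: "\<not> (\<exists>p k. Factorial_Ring.prime p \<and> n = p ^ k)"
  obtains (product) p q where "Factorial_Ring.prime p" "Factorial_Ring.prime q" "p \<noteq> q" "n = p * q"
  | (three_primes) p q r where "Factorial_Ring.prime p" "Factorial_Ring.prime q" "Factorial_Ring.prime r"
      "p \<noteq> q" "p \<noteq> r" "q \<noteq> r" "p dvd n" "q dvd n" "r dvd n"
  | (square) p q where "Factorial_Ring.prime p" "Factorial_Ring.prime q" "p \<noteq> q"
      "p ^ 2 dvd n" "q dvd n"
proof -
  have "n \<noteq> 1"
    using not_prime_power two_is_prime_nat by (metis power_0)
  then obtain p where p: "Factorial_Ring.prime p" "p dvd n"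
    using prime_factor_nat by blast
  obtain m where m: "n = p ^ multiplicity p n * m" "\<not> p dvd m"
    by (rule multiplicity_decompose'[of n p]) (use \<open>n > 0\<close> p in auto)
  have "m \<noteq> 1"
    using m not_prime_power p by auto
  then obtain q where q: "Factorial_Ring.prime q" "q dvd m"
    using prime_factor_nat by blast
  have "q \<noteq> p"
    using q m by auto
  have "q dvd n"
    using q(2) by (subst m(1)) simp
  have "p * q dvd n"
    using p q \<open>q dvd n\<close> \<open>q \<noteq> p\<close> by (simp add: divides_mult primes_coprime)
  then obtain k where k: "n = p * q * k"
    by (auto elim: dvdE)
  show thesis
  proof (cases "k = 1")
    case True
    then show thesis
      using product p q \<open>q \<noteq> p\<close> k by simp
  next
    case False
    then obtain r where r: "Factorial_Ring.prime r" "r dvd k"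
      using prime_factor_nat by blast
    then have "r dvd n"
      using k by simp
    consider "r = p" | "r = q" | "r \<noteq> p" "r \<noteq> q"
      by blast
    then show thesis
    proof cases
      case 1
      then have "p ^ 2 dvd n"
        using k r by (auto simp: power2_eq_square mult_dvd_mono)
      then show thesis
        using square p q \<open>q \<noteq> p\<close> \<open>q dvd n\<close> by simp
    next
      case 2
      then have "q ^ 2 dvd n"
        using k r by (auto simp: power2_eq_square mult_dvd_mono)
      then show thesis
        using square p q \<open>q \<noteq> p\<close> by simp
    next
      case 3
      then show thesis
        using three_primes p q r \<open>q \<noteq> p\<close> \<open>q dvd n\<close> \<open>r dvd n\<close> by simp
    qed
  qed
qed

section \<open>Comparability graphs without induced paths on four vertices\<close>

lemma cograph_comparability_of_tree_order:
  assumes trans: "\<And>x y z. \<lbrakk>x \<in> V; y \<in> V; z \<in> V; R x y; R y z\<rbrakk> \<Longrightarrow> R x z"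
    and below_chain: "\<And>x y z. \<lbrakk>x \<in> V; y \<in> V; z \<in> V; R x z; R y z\<rbrakk> \<Longrightarrow> R x y \<or> R y x"
    and E: "\<And>u v. \<lbrakk>u \<in> V; v \<in> V\<rbrakk> \<Longrightarrow> E u v \<longleftrightarrow> u \<noteq> v \<and> (R u v \<or> R v u)"
  shows "cograph V E"
  unfolding cograph_def
proof clarify
  fix a b c d assume V: "a \<in> V" "b \<in> V" "c \<in> V" "d \<in> V" and "distinct [a, b, c, d]"
    and "E a b" "E b c" "E c d" "\<not> E a c" "\<not> E b d" "\<not> E a d"
  with E have ab: "R a b \<or> R b a" and bc: "R b c \<or> R c b" and cd: "R c d \<or> R d c"
    and ac: "\<not> R a c" "\<not> R c a" and bd: "\<not> R b d" "\<not> R d b" and "\<not> R a d" "\<not> R d a"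
    by auto
  have "\<not> R c b"
  proof
    assume cb: "R c b"
    show False
      using ab below_chain[OF V(1,3,2) _ cb] trans[OF V(3,2,1) cb] ac by blast
  qed
  with bc have "R b c" by blast
  with cd trans[OF V(2,3,4)] bd have "R d c" by blast
  from below_chain[OF V(2,4,3) \<open>R b c\<close> this] bd show False by blast
qed

lemma cograph_comparability_of_unique_incomparable:
  assumes trans: "\<And>x y z. \<lbrakk>x \<in> V; y \<in> V; z \<in> V; R x y; R y z\<rbrakk> \<Longrightarrow> R x z"
    and incomparable_unique: "\<And>x y z. \<lbrakk>x \<in> V; y \<in> V; z \<in> V;
        \<not> R x y; \<not> R y x; \<not> R x z; \<not> R z x\<rbrakk> \<Longrightarrow> R y z \<and> R z y"
    and E: "\<And>u v. \<lbrakk>u \<in> V; v \<in> V\<rbrakk> \<Longrightarrow> E u v \<longleftrightarrow> u \<noteq> v \<and> (R u v \<or> R v u)"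
  shows "cograph V E"
  unfolding cograph_def
proof clarify
  fix a b c d assume V: "a \<in> V" "b \<in> V" "c \<in> V" "d \<in> V" and "distinct [a, b, c, d]"
    and "E a b" "E b c" "E c d" "\<not> E a c" "\<not> E b d" "\<not> E a d"
  with E have bc: "R b c \<or> R c b" and "\<not> R a c" "\<not> R c a" "\<not> R a d" "\<not> R d a"
    and bd: "\<not> R b d" "\<not> R d b"
    by auto
  then have "R c d \<and> R d c" using incomparable_unique[OF V(1,3,4)] by blast
  then show False using bc bd trans[OF V(2,3,4)] trans[OF V(4,3,2)] by blast
qed

section \<open>Power graphs of prime power order and of cyclic groups of order pq\<close>

context group
begin

lemma power_of_refl: "u \<in> carrier G \<Longrightarrow> power_of G u u"
  unfolding power_of_def by (metis int_pow_1)

lemma power_of_trans: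
  "\<lbrakk>w \<in> carrier G; power_of G u v; power_of G v w\<rbrakk> \<Longrightarrow> power_of G u w"
  unfolding power_of_def by (metis int_pow_pow)

lemma power_adj_iff_power_of:
  "\<lbrakk>u \<in> carrier G; v \<in> carrier G\<rbrakk> \<Longrightarrow>
     power_adj G u v \<longleftrightarrow> u \<noteq> v \<and> (power_of G u v \<or> power_of G v u)"
  unfolding power_adj_def power_of_def by auto

lemma power_of_pow_iff:
  assumes z: "z \<in> carrier G"
  shows "power_of G (z [^] i) (z [^] j) \<longleftrightarrow> gcd j (int (ord z)) dvd i"
proof
  assume "power_of G (z [^] i) (z [^] j)"
  then obtain t :: int where "z [^] i = z [^] (j * t)"
    unfolding power_of_def using z by (auto simp: int_pow_pow)
  then have "int (ord z) dvd j * t - i"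
    using int_pow_eq[OF z] by simp
  then have "gcd j (int (ord z)) dvd j * t - (j * t - i)"
    by (meson dvd_diff dvd_mult2 dvd_trans gcd_dvd1 gcd_dvd2)
  then show "gcd j (int (ord z)) dvd i"
    by simp
next
  assume "gcd j (int (ord z)) dvd i"
  then obtain k where k: "i = gcd j (int (ord z)) * k" by (auto elim: dvdE)
  obtain u v where "u * j + v * int (ord z) = gcd j (int (ord z))"
    using bezout_int by blast
  with k have "i = (u * j + v * int (ord z)) * k"
    by simp
  also have "\<dots> = j * (u * k) + int (ord z) * (v * k)"
    by (simp add: algebra_simps)
  finally have "z [^] i = z [^] (j * (u * k)) \<otimes> z [^] (int (ord z) * (v * k))"
    using z by (simp add: int_pow_mult)
  also have "z [^] (int (ord z) * (v * k)) = \<one>"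
    using int_pow_eq_id[OF z] by simp
  finally have "z [^] i = (z [^] j) [^] (u * k)"
    using z by (simp add: int_pow_pow)
  then show "power_of G (z [^] i) (z [^] j)"
    unfolding power_of_def by blast
qed

lemma cyclic_group_generator:
  assumes "cyclic_group G"
  obtains g where "g \<in> carrier G" "carrier G = range (\<lambda>i::int. g [^] i)" "ord g = order G"
proof -
  obtain g where g: "g \<in> carrier G" and carrier: "carrier G = range (\<lambda>i::int. g [^] i)"
    using assms cyclic_group by blast
  have "generate G {g} = carrier G"
    using generate_pow[OF g] carrier by auto
  then have "ord g = order G"
    using generate_pow_card[OF g] unfolding order_def by simp
  with g carrier show thesis using that by blast
qed

lemma prime_power_order_power_graph_cograph:
  assumes "Factorial_Ring.prime p" and order: "order G = p ^ k"
  shows "power_graph_is_cograph G"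
  unfolding power_graph_is_cograph_def
proof (rule cograph_comparability_of_tree_order[where R = "power_of G"])
  fix x y z assume xyz: "x \<in> carrier G" "y \<in> carrier G" "z \<in> carrier G"
    and "power_of G x z" "power_of G y z"
  then obtain i j :: int where x: "x = z [^] i" and y: "y = z [^] j"
    unfolding power_of_def by blast
  have "ord z dvd p ^ k"
    using ord_dvd_group_order[OF xyz(3)] order by simp
  then have "int (ord z) dvd int p ^ k"
    by (metis of_nat_dvd_iff of_nat_power)
  then have "gcd i (int (ord z)) dvd gcd j (int (ord z)) \<or> gcd j (int (ord z)) dvd gcd i (int (ord z))"
    using prime_power_divisors_comparable[of "int p"] \<open>Factorial_Ring.prime p\<close>
    by (meson dvd_trans gcd_dvd2 prime_nat_int_transfer)
  then show "power_of G x y \<or> power_of G y x"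
    unfolding x y power_of_pow_iff[OF xyz(3)] by (meson dvd_trans gcd_dvd1)
qed (use power_of_trans power_adj_iff_power_of in blast)+

lemma cyclic_prime_product_power_graph_cograph:
  assumes "cyclic_group G" and p: "Factorial_Ring.prime p" and q: "Factorial_Ring.prime q"
    and "p \<noteq> q" and order: "order G = p * q"
  shows "power_graph_is_cograph G"
  unfolding power_graph_is_cograph_def
proof (rule cograph_comparability_of_unique_incomparable[where R = "power_of G"])
  obtain g where g: "g \<in> carrier G" and carrier: "carrier G = range (\<lambda>i::int. g [^] i)"
    and "ord g = order G"
    using cyclic_group_generator[OF \<open>cyclic_group G\<close>] by blast
  define label where "label i = gcd i (int p * int q)" for i :: int
  have power_of_iff: "power_of G (g [^] i) (g [^] j) \<longleftrightarrow> label j dvd label i" for i j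
    unfolding power_of_pow_iff[OF g] label_def \<open>ord g = order G\<close> order of_nat_mult
    by simp
  have "\<not> int p dvd int q" "\<not> int q dvd int p"
    using p q \<open>p \<noteq> q\<close> by (simp_all add: prime_dvd_prime_iff)
  note incomparable = prime_product_divisors_incomparable[OF this,
      OF gcd_prime_product_cases[OF p q] gcd_prime_product_cases[OF p q], folded label_def]
  show "power_of G y z \<and> power_of G z y"
    if "x \<in> carrier G" "y \<in> carrier G" "z \<in> carrier G"
      "\<not> power_of G x y" "\<not> power_of G y x" "\<not> power_of G x z" "\<not> power_of G z x" for x y z
  proof -
    from that obtain i j k :: int where "x = g [^] i" "y = g [^] j" "z = g [^] k"
      unfolding carrier by blast
    with that have ij: "\<not> label i dvd label j" "\<not> label j dvd label i"
      and ik: "\<not> label i dvd label k" "\<not> label k dvd label i"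
      by (simp_all add: power_of_iff)
    from incomparable[OF ij] incomparable[OF ik] have "label j = label k"
      by auto
    then show ?thesis
      using \<open>y = g [^] j\<close> \<open>z = g [^] k\<close> by (simp add: power_of_iff)
  qed
qed (metis power_of_trans, metis power_adj_iff_power_of)

end

section \<open>Elements of coprime order commute in a nilpotent group\<close>

context group
begin

lemma inv_mult_cancel_left [simp]:
  "\<lbrakk>x \<in> carrier G; y \<in> carrier G\<rbrakk> \<Longrightarrow> inv x \<otimes> (x \<otimes> y) = y"
  by (simp flip: m_assoc)

lemma inv_commute:
  assumes c: "c \<in> carrier G" and x: "x \<in> carrier G" and comm: "c \<otimes> x = x \<otimes> c"
  shows "inv c \<otimes> x = x \<otimes> inv c"
proof -
  have "c \<otimes> (x \<otimes> inv c) = x \<otimes> c \<otimes> inv c"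
    using c x by (simp add: comm flip: m_assoc)
  then have "c \<otimes> (x \<otimes> inv c) = x"
    using c x by (simp add: m_assoc)
  then show ?thesis
    using c x by (simp add: inv_solve_left')
qed

lemma commutator_closed [simp]:
  "\<lbrakk>x \<in> carrier G; y \<in> carrier G\<rbrakk> \<Longrightarrow> commutator G x y \<in> carrier G"
  unfolding commutator_def by simp

lemma commutator_eq_one_iff:
  assumes "x \<in> carrier G" and "y \<in> carrier G"
  shows "commutator G x y = \<one> \<longleftrightarrow> x \<otimes> y = y \<otimes> x"
proof -
  have "commutator G x y = x \<otimes> y \<otimes> inv (y \<otimes> x)"
    using assms unfolding commutator_def by (simp add: inv_mult_group m_assoc)
  then show ?thesis
    using assms by (simp add: inv_solve_right')
qed

lemma conj_commutator:
  assumes "g \<in> carrier G" and "x \<in> carrier G" and "y \<in> carrier G"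
  shows "g \<otimes> commutator G x y \<otimes> inv g
    = commutator G (g \<otimes> x \<otimes> inv g) (g \<otimes> y \<otimes> inv g)"
  using assms unfolding commutator_def by (simp add: inv_mult_group m_assoc)

lemma lower_central_step_normal:
  assumes "H \<lhd> G"
  shows "lower_central_step G H \<lhd> G"
proof -
  interpret H: normal H G using assms .
  show ?thesis
    unfolding lower_central_step_eq
  proof (rule normal_generateI)
    show "{commutator G h g | h g. h \<in> H \<and> g \<in> carrier G} \<subseteq> carrier G"
      using H.subset by auto
  next
    fix c k assume "c \<in> {commutator G h g | h g. h \<in> H \<and> g \<in> carrier G}" and k: "k \<in> carrier G"
    then obtain h g where h: "h \<in> H" and g: "g \<in> carrier G" and c: "c = commutator G h g"
      by blast
    then have "k \<otimes> c \<otimes> inv k = commutator G (k \<otimes> h \<otimes> inv k) (k \<otimes> g \<otimes> inv k)"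
      using conj_commutator[OF k] H.subset by auto
    moreover have "k \<otimes> h \<otimes> inv k \<in> H" and "k \<otimes> g \<otimes> inv k \<in> carrier G"
      using H.inv_op_closed2[OF k h] k g by auto
    ultimately show "k \<otimes> c \<otimes> inv k \<in> {commutator G h g | h g. h \<in> H \<and> g \<in> carrier G}"
      by blast
  qed
qed

lemma lower_central_series_normal: "(lower_central_step G ^^ n) (carrier G) \<lhd> G"
  by (induction n) (simp_all add: normal_self lower_central_step_normal)

lemma conj_nat_pow:
  assumes "g \<in> carrier G" and "y \<in> carrier G"
  shows "(g \<otimes> y \<otimes> inv g) [^] (n :: nat) = g \<otimes> y [^] n \<otimes> inv g"
proof (induction n)
  case 0
  show ?case using assms by simp
next
  case (Suc n)
  then show ?case
    using assms by (simp add: m_assoc nat_pow_Suc2 del: nat_pow_Suc)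
qed

lemma ord_dvd_of_conj_eq_mult:
  assumes x: "x \<in> carrier G" and y: "y \<in> carrier G" and c: "c \<in> carrier G"
    and conj: "x \<otimes> y \<otimes> inv x = c \<otimes> y" and comm: "c \<otimes> y = y \<otimes> c"
  shows "ord c dvd ord y"
proof -
  have "c [^] ord y \<otimes> y [^] ord y = (x \<otimes> y \<otimes> inv x) [^] ord y"
    unfolding conj using pow_mult_distrib[OF comm c y] by simp
  also have "\<dots> = \<one>"
    using conj_nat_pow[OF x y] x y by simp
  finally show ?thesis
    using c y by (simp add: pow_eq_id)
qed

lemma commutator_eq_one_of_coprime:
  assumes x: "x \<in> carrier G" and y: "y \<in> carrier G" and cop: "coprime (ord x) (ord y)"
    and cx: "commutator G x y \<otimes> x = x \<otimes> commutator G x y"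
    and cy: "commutator G x y \<otimes> y = y \<otimes> commutator G x y"
  shows "commutator G x y = \<one>"
proof -
  let ?c = "commutator G x y"
  have c: "?c \<in> carrier G" using x y by simp
  have "x \<otimes> y \<otimes> inv x = ?c \<otimes> y"
    using x y unfolding commutator_def by (simp add: m_assoc)
  then have "ord ?c dvd ord y"
    using ord_dvd_of_conj_eq_mult[OF x y c _ cy] by blast
  have "y \<otimes> x \<otimes> inv y = inv ?c \<otimes> x"
    using x y unfolding commutator_def by (simp add: inv_mult_group m_assoc)
  moreover have "inv ?c \<otimes> x = x \<otimes> inv ?c"
    using inv_commute[OF c x cx] .
  ultimately have "ord ?c dvd ord x"
    using ord_dvd_of_conj_eq_mult[OF y x inv_closed[OF c]] c by simp
  with \<open>ord ?c dvd ord y\<close> cop have "ord ?c = 1"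
    using coprime_common_divisor_nat by blast
  then show ?thesis
    using ord_eq_1[OF c] by simp
qed

end

context group_hom
begin

lemma ord_hom_dvd:
  assumes "x \<in> carrier G"
  shows "group.ord H (h x) dvd group.ord G x"
proof -
  have "h x [^]\<^bsub>H\<^esub> group.ord G x = \<one>\<^bsub>H\<^esub>"
    using assms by (simp flip: hom_nat_pow)
  then show ?thesis
    using assms by (simp add: H.pow_eq_id)
qed

lemma hom_commutator:
  assumes "x \<in> carrier G" and "y \<in> carrier G"
  shows "h (commutator G x y) = commutator H (h x) (h y)"
  using assms unfolding commutator_def by (simp add: hom_inv)

end

lemma (in normal) commutator_mem_of_coprime:
  assumes x: "x \<in> carrier G" and y: "y \<in> carrier G" and cop: "coprime (ord x) (ord y)"
    and central: "\<And>z. z \<in> carrier G \<Longrightarrow> commutator G (commutator G x y) z \<in> H"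
  shows "commutator G x y \<in> H"
proof -
  interpret Q: group "G Mod H"
    by (rule factorgroup_is_group)
  interpret f: group_hom G "G Mod H" "\<lambda>a. H #> a"
    using r_coset_hom_Mod by unfold_locales
  have kernel: "H #> a = \<one>\<^bsub>G Mod H\<^esub> \<longleftrightarrow> a \<in> H" if "a \<in> carrier G" for a
    using coset_join1[OF _ that is_subgroup] coset_join2[OF that is_subgroup] by auto
  let ?c = "commutator G x y"
  have c: "?c \<in> carrier G" using x y by simp
  have fc: "commutator (G Mod H) (H #> x) (H #> y) = H #> ?c"
    using f.hom_commutator[OF x y] by simp
  have "(H #> ?c) \<otimes>\<^bsub>G Mod H\<^esub> (H #> z) = (H #> z) \<otimes>\<^bsub>G Mod H\<^esub> (H #> ?c)"
    if z: "z \<in> carrier G" for z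
  proof -
    have "commutator (G Mod H) (H #> ?c) (H #> z) = \<one>\<^bsub>G Mod H\<^esub>"
      using central[OF z] kernel c z by (simp flip: f.hom_commutator)
    then show ?thesis
      using Q.commutator_eq_one_iff[OF f.hom_closed[OF c] f.hom_closed[OF z]] by blast
  qed
  note central_mod = this[OF x, folded fc] this[OF y, folded fc]
  have "coprime (Q.ord (H #> x)) (Q.ord (H #> y))"
    by (rule coprime_divisors[OF f.ord_hom_dvd[OF x] f.ord_hom_dvd[OF y] cop])
  then have "H #> ?c = \<one>\<^bsub>G Mod H\<^esub>"
    unfolding fc[symmetric] using f.hom_closed x y central_mod
    by (intro Q.commutator_eq_one_of_coprime) auto
  then show ?thesis
    using kernel[OF c] by simp
qed

context group
begin

lemma commutator_mem_lower_central_series: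
  assumes x: "x \<in> carrier G" and y: "y \<in> carrier G" and cop: "coprime (ord x) (ord y)"
  shows "commutator G x y \<in> (lower_central_step G ^^ n) (carrier G)"
proof (induction n)
  case 0
  show ?case using x y by simp
next
  case (Suc n)
  interpret N: normal "(lower_central_step G ^^ Suc n) (carrier G)" G
    by (rule lower_central_series_normal)
  show ?case
  proof (rule N.commutator_mem_of_coprime[OF x y cop])
    fix z assume "z \<in> carrier G"
    with Suc show "commutator G (commutator G x y) z \<in> (lower_central_step G ^^ Suc n) (carrier G)"
      unfolding funpow.simps comp_def lower_central_step_eq by (intro generate.incl) blast
  qed
qed

lemma nilpotent_coprime_commute:
  assumes "nilpotent_group G" and x: "x \<in> carrier G" and y: "y \<in> carrier G"
    and "coprime (ord x) (ord y)"
  shows "x \<otimes> y = y \<otimes> x"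
proof -
  obtain n where "(lower_central_step G ^^ n) (carrier G) = {\<one>}"
    using assms(1) unfolding nilpotent_group_def by blast
  then have "commutator G x y = \<one>"
    using commutator_mem_lower_central_series[OF x y \<open>coprime (ord x) (ord y)\<close>, of n] by simp
  then show ?thesis
    using commutator_eq_one_iff[OF x y] by simp
qed

end

section \<open>Induced paths in power graphs\<close>

context group
begin

lemma ord_dvd_of_power_of:
  assumes v: "v \<in> carrier G" and "power_of G u v"
  shows "ord u dvd ord v"
proof -
  obtain i :: int where u: "u = v [^] i"
    using \<open>power_of G u v\<close> unfolding power_of_def by blast
  have "u [^] int (ord v) = (v [^] int (ord v)) [^] i"
    using v unfolding u by (simp add: int_pow_pow mult.commute)
  also have "\<dots> = \<one>"
    using v by (simp add: int_pow_int)
  finally show ?thesis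
    using v u int_pow_eq_id by simp
qed

lemma not_power_of_of_ord_not_dvd:
  "\<lbrakk>v \<in> carrier G; \<not> ord u dvd ord v\<rbrakk> \<Longrightarrow> \<not> power_of G u v"
  using ord_dvd_of_power_of by blast

lemma power_of_mult_of_coprime_left:
  assumes a: "a \<in> carrier G" and b: "b \<in> carrier G" and ab: "a \<otimes> b = b \<otimes> a"
    and cop: "coprime (ord a) (ord b)"
  shows "power_of G a (a \<otimes> b)"
proof -
  obtain u v :: int where uv: "int (ord b) * u + int (ord a) * v = 1"
    using cop bezout_int[of "int (ord b)" "int (ord a)"]
    by (auto simp: coprime_iff_gcd_eq_1 gcd.commute mult.commute)
  have "(a \<otimes> b) [^] (int (ord b) * u) = a [^] (int (ord b) * u)"
    using a b int_pow_mult_distrib[OF ab a b] by (simp add: int_pow_eq_id[OF b])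
  also have "\<dots> = a [^] (int (ord b) * u) \<otimes> a [^] (int (ord a) * v)"
    using a by (simp add: int_pow_eq_id[OF a])
  also have "\<dots> = a [^] (int (ord b) * u + int (ord a) * v)"
    using a by (rule int_pow_mult[symmetric])
  also have "\<dots> = a"
    using a uv by simp
  finally have "a = (a \<otimes> b) [^] (int (ord b) * u)" ..
  then show ?thesis
    unfolding power_of_def by blast
qed

lemma power_of_mult_of_coprime_right:
  assumes a: "a \<in> carrier G" and b: "b \<in> carrier G" and ab: "a \<otimes> b = b \<otimes> a"
    and cop: "coprime (ord a) (ord b)"
  shows "power_of G b (a \<otimes> b)"
  using power_of_mult_of_coprime_left[OF b a ab[symmetric] cop[THEN coprime_commute[THEN iffD1]]]
  by (simp add: ab)

lemma ord_mult_of_coprime: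
  assumes a: "a \<in> carrier G" and b: "b \<in> carrier G" and ab: "a \<otimes> b = b \<otimes> a"
    and cop: "coprime (ord a) (ord b)"
  shows "ord (a \<otimes> b) = ord a * ord b"
proof (rule dvd_antisym)
  show "ord (a \<otimes> b) dvd ord a * ord b"
    using ord_mul_divides[OF ab a b] .
  have "ord a dvd ord (a \<otimes> b)" and "ord b dvd ord (a \<otimes> b)"
    using ord_dvd_of_power_of[OF m_closed[OF a b]] power_of_mult_of_coprime_left[OF a b ab cop]
      power_of_mult_of_coprime_right[OF a b ab cop] by blast+
  then show "ord a * ord b dvd ord (a \<otimes> b)"
    using cop by (simp add: divides_mult)
qed

lemma power_of_factor_of_mult:
  assumes a: "a \<in> carrier G" and b: "b \<in> carrier G" and ab: "a \<otimes> b = b \<otimes> a"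
    and cop: "coprime (ord a) (ord b)"
    and w: "power_of G w (a \<otimes> b)" and "ord w dvd ord a"
  shows "power_of G w a"
proof -
  obtain i :: int where i: "w = (a \<otimes> b) [^] i"
    using w unfolding power_of_def by blast
  have "w [^] int (ord a) = \<one>"
    using i a b \<open>ord w dvd ord a\<close> int_pow_eq_id by simp
  moreover have "w [^] int (ord a) = (a \<otimes> b) [^] (i * int (ord a))"
    using i a b by (simp add: int_pow_pow)
  moreover have "\<dots> = a [^] (i * int (ord a)) \<otimes> b [^] (i * int (ord a))"
    using int_pow_mult_distrib[OF ab a b] .
  moreover have "a [^] (i * int (ord a)) = \<one>"
    using a int_pow_eq_id by simp
  ultimately have "b [^] (i * int (ord a)) = \<one>"
    using b by simp
  then have "int (ord b) dvd i * int (ord a)"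
    using int_pow_eq_id[OF b] by simp
  moreover have "coprime (int (ord b)) (int (ord a))"
    using cop by (simp add: coprime_commute)
  ultimately have "int (ord b) dvd i"
    by (simp add: coprime_dvd_mult_left_iff)
  then have "w = a [^] i"
    using i a b int_pow_mult_distrib[OF ab a b] int_pow_eq_id[OF b] by simp
  then show ?thesis
    unfolding power_of_def by blast
qed

lemma not_power_graph_cograph_of_path:
  assumes V: "a \<in> carrier G" "b \<in> carrier G" "c \<in> carrier G" "d \<in> carrier G"
    and ab: "power_of G a b \<or> power_of G b a" and bc: "power_of G b c \<or> power_of G c b"
    and cd: "power_of G c d \<or> power_of G d c"
    and ac: "\<not> power_of G a c" "\<not> power_of G c a" and bd: "\<not> power_of G b d" "\<not> power_of G d b"
    and ad: "\<not> power_of G a d" "\<not> power_of G d a"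
    and "a \<noteq> b" "b \<noteq> c" "c \<noteq> d"
  shows "\<not> power_graph_is_cograph G"
proof -
  have "a \<noteq> c" "b \<noteq> d" "a \<noteq> d"
    using ac bd ad power_of_refl V by auto
  with assms show ?thesis
    unfolding power_graph_is_cograph_def cograph_def by (auto simp: power_adj_iff_power_of)
qed

lemma three_primes_power_graph_not_cograph:
  assumes x: "x \<in> carrier G" "ord x = p" and y: "y \<in> carrier G" "ord y = q"
    and z: "z \<in> carrier G" "ord z = r"
    and p: "Factorial_Ring.prime p" and q: "Factorial_Ring.prime q" and r: "Factorial_Ring.prime r"
    and "p \<noteq> q" "p \<noteq> r" "q \<noteq> r"
    and xy: "x \<otimes> y = y \<otimes> x" and yz: "y \<otimes> z = z \<otimes> y"
  shows "\<not> power_graph_is_cograph G"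
proof -
  have cop: "coprime (ord x) (ord y)" "coprime (ord y) (ord z)"
    using x y z p q r \<open>p \<noteq> q\<close> \<open>q \<noteq> r\<close> by (simp_all add: primes_coprime)
  have xyG: "x \<otimes> y \<in> carrier G" and yzG: "y \<otimes> z \<in> carrier G"
    using x y z by simp_all
  have ord: "ord (x \<otimes> y) = p * q" "ord (y \<otimes> z) = q * r"
    using ord_mult_of_coprime[OF x(1) y(1) xy cop(1)] ord_mult_of_coprime[OF y(1) z(1) yz cop(2)]
      x y z by simp_all
  have "\<not> p dvd q" "\<not> q dvd p" "\<not> p dvd q * r" "\<not> q * r dvd p"
    "\<not> p * q dvd q * r" "\<not> q * r dvd p * q" "p \<noteq> p * q" "q \<noteq> p * q" "q \<noteq> q * r"
    using p q r \<open>p \<noteq> q\<close> \<open>p \<noteq> r\<close> \<open>q \<noteq> r\<close> prime_gt_1_nat[OF p] prime_gt_1_nat[OF q]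
      prime_gt_1_nat[OF r]
    by (auto simp: prime_dvd_prime_iff prime_dvd_mult_iff dest: dvd_mult_left dvd_mult_right)
  with x y z ord xyG yzG
  have "\<not> power_of G x y" "\<not> power_of G y x" "\<not> power_of G (x \<otimes> y) (y \<otimes> z)"
    "\<not> power_of G (y \<otimes> z) (x \<otimes> y)" "\<not> power_of G x (y \<otimes> z)" "\<not> power_of G (y \<otimes> z) x"
    "x \<noteq> x \<otimes> y" "x \<otimes> y \<noteq> y" "y \<noteq> y \<otimes> z"
    by (auto simp: not_power_of_of_ord_not_dvd)
  with x y z xyG yzG show ?thesis
    using power_of_mult_of_coprime_left[OF x(1) y(1) xy cop(1)] power_of_mult_of_coprime_right[OF x(1) y(1) xy cop(1)]
      power_of_mult_of_coprime_left[OF y(1) z(1) yz cop(2)]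
    by (intro not_power_graph_cograph_of_path[of x "x \<otimes> y" y "y \<otimes> z"]) auto
qed

lemma prime_square_power_graph_not_cograph:
  assumes w: "w \<in> carrier G" "ord w = p ^ 2" and y: "y \<in> carrier G" "ord y = q"
    and p: "Factorial_Ring.prime p" and q: "Factorial_Ring.prime q" and "p \<noteq> q"
    and comm: "w [^] p \<otimes> y = y \<otimes> w [^] p"
  shows "\<not> power_graph_is_cograph G"
proof -
  define x where "x = w [^] p"
  have x: "x \<in> carrier G" "ord x = p"
    unfolding x_def using w ord_pow[OF w(1), of p] prime_gt_0_nat[OF p] by (simp_all add: power2_eq_square)
  have xy: "x \<otimes> y = y \<otimes> x"
    using comm unfolding x_def .
  have cop: "coprime (ord x) (ord y)"
    using x y p q \<open>p \<noteq> q\<close> by (simp add: primes_coprime)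
  have xyG: "x \<otimes> y \<in> carrier G"
    using x y by simp
  have ord: "ord (x \<otimes> y) = p * q"
    using ord_mult_of_coprime[OF x(1) y(1) xy cop] x y by simp
  have "power_of G x w"
    unfolding x_def power_of_def by (metis int_pow_int)
  have "\<not> p dvd q" "\<not> q dvd p" "\<not> p ^ 2 dvd q" "\<not> q dvd p ^ 2"
    "\<not> p ^ 2 dvd p * q" "\<not> p * q dvd p ^ 2" "p ^ 2 \<noteq> p" "p \<noteq> p * q" "q \<noteq> p * q"
    using p q \<open>p \<noteq> q\<close> prime_gt_1_nat[OF p] prime_gt_1_nat[OF q]
    by (auto simp: prime_dvd_prime_iff prime_dvd_mult_iff prime_dvd_power_iff power2_eq_square
        dest: dvd_mult_left dvd_mult_right)
  with w x y ord xyG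
  have "\<not> power_of G w (x \<otimes> y)" "\<not> power_of G (x \<otimes> y) w" "\<not> power_of G x y"
    "\<not> power_of G y x" "\<not> power_of G w y" "\<not> power_of G y w"
    "w \<noteq> x" "x \<noteq> x \<otimes> y" "x \<otimes> y \<noteq> y"
    by (auto simp: not_power_of_of_ord_not_dvd)
  with w x y xyG \<open>power_of G x w\<close> show ?thesis
    using power_of_mult_of_coprime_left[OF x(1) y(1) xy cop] power_of_mult_of_coprime_right[OF x(1) y(1) xy cop]
    by (intro not_power_graph_cograph_of_path[of w x "x \<otimes> y" y]) auto
qed

lemma incomparable_pair_power_graph_not_cograph:
  assumes x: "x \<in> carrier G" "ord x = p" and x': "x' \<in> carrier G" "ord x' = p"
    and y: "y \<in> carrier G" "ord y = q"
    and p: "Factorial_Ring.prime p" and q: "Factorial_Ring.prime q" and "p \<noteq> q"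
    and xx': "\<not> power_of G x x'" "\<not> power_of G x' x"
    and xy: "x \<otimes> y = y \<otimes> x" and x'y: "x' \<otimes> y = y \<otimes> x'"
  shows "\<not> power_graph_is_cograph G"
proof -
  have cop: "coprime (ord x) (ord y)" "coprime (ord x') (ord y)"
    using x x' y p q \<open>p \<noteq> q\<close> by (simp_all add: primes_coprime)
  have xyG: "x \<otimes> y \<in> carrier G" and x'yG: "x' \<otimes> y \<in> carrier G"
    using x x' y by simp_all
  have ord: "ord (x \<otimes> y) = p * q" "ord (x' \<otimes> y) = p * q"
    using ord_mult_of_coprime[OF x(1) y(1) xy cop(1)] ord_mult_of_coprime[OF x'(1) y(1) x'y cop(2)]
      x x' y by simp_all
  note edges = power_of_mult_of_coprime_left[OF x(1) y(1) xy cop(1)]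
    power_of_mult_of_coprime_right[OF x(1) y(1) xy cop(1)]
    power_of_mult_of_coprime_left[OF x'(1) y(1) x'y cop(2)]
    power_of_mult_of_coprime_right[OF x'(1) y(1) x'y cop(2)]
  have "\<not> power_of G x (x' \<otimes> y)" "\<not> power_of G x' (x \<otimes> y)"
    using power_of_factor_of_mult[OF x(1) y(1) xy cop(1)] power_of_factor_of_mult[OF x'(1) y(1) x'y cop(2)]
      x x' xx' by auto
  then have "\<not> power_of G (x \<otimes> y) (x' \<otimes> y)" "\<not> power_of G (x' \<otimes> y) (x \<otimes> y)"
    using power_of_trans edges x'yG xyG by blast+
  moreover have "\<not> p dvd q" "\<not> q dvd p" "\<not> p * q dvd p" "p \<noteq> p * q" "q \<noteq> p * q"
    using p q \<open>p \<noteq> q\<close> prime_gt_1_nat[OF p] prime_gt_1_nat[OF q]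
    by (auto simp: prime_dvd_prime_iff dest: dvd_mult_right)
  with x y ord xyG x'yG
  have "\<not> power_of G x y" "\<not> power_of G y x" "\<not> power_of G (x' \<otimes> y) x"
    "x \<noteq> x \<otimes> y" "x \<otimes> y \<noteq> y" "y \<noteq> x' \<otimes> y"
    by (auto simp: not_power_of_of_ord_not_dvd)
  ultimately show ?thesis
    using x y xyG x'yG edges \<open>\<not> power_of G x (x' \<otimes> y)\<close>
    by (intro not_power_graph_cograph_of_path[of x "x \<otimes> y" y "x' \<otimes> y"]) auto
qed

end

section \<open>Nilpotent groups whose power graph is a cograph\<close>

context group
begin

lemma power_of_sym_of_ord_eq:
  assumes "finite (carrier G)" and u: "u \<in> carrier G" and v: "v \<in> carrier G"
    and "ord u = ord v" and "power_of G u v"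
  shows "power_of G v u"
proof -
  have "u \<in> generate G {v}"
    using \<open>power_of G u v\<close> generate_pow[OF v] unfolding power_of_def by blast
  then have "generate G {u} \<subseteq> generate G {v}"
    using generate_subgroup_incl[OF _ generate_is_subgroup] v by auto
  moreover have "finite (generate G {v})"
    using generate_incl[of "{v}"] v \<open>finite (carrier G)\<close> finite_subset by auto
  moreover have "card (generate G {u}) = card (generate G {v})"
    using generate_pow_card u v \<open>ord u = ord v\<close> by simp
  ultimately have "generate G {u} = generate G {v}"
    using card_subset_eq by blast
  then have "v \<in> generate G {u}"
    using generate.incl[of v "{v}" G] by simp
  then show ?thesis
    using generate_pow[OF u] unfolding power_of_def by blast
qed

lemma ord_dvd_card_subgroup:
  assumes "subgroup H G" and "h \<in> H"
  shows "ord h dvd card H"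
proof -
  interpret H: group "G\<lparr>carrier := H\<rparr>"
    using subgroup_imp_group[OF assms(1)] .
  have "h [^] card H = \<one>"
    using H.pow_order_eq_1[of h] assms nat_pow_consistent unfolding order_def by simp
  then show ?thesis
    using pow_eq_id[OF subgroup.mem_carrier[OF assms]] by simp
qed

lemma exists_ord_eq_prime:
  assumes "finite (carrier G)" and p: "Factorial_Ring.prime p" and "p dvd order G"
  obtains x where "x \<in> carrier G" and "ord x = p"
proof -
  from \<open>p dvd order G\<close> obtain m where "order G = p ^ 1 * m"
    by (auto elim: dvdE)
  from sylow_thm[OF p is_group this assms(1)] obtain H where H: "subgroup H G" "card H = p"
    by auto
  obtain h where h: "h \<in> H" "h \<noteq> \<one>"
    using card_gt_1_obtains_other H prime_gt_1_nat[OF p] by metis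
  then have hG: "h \<in> carrier G"
    using subgroup.mem_carrier[OF H(1)] by simp
  have "ord h dvd p" and "ord h \<noteq> 1"
    using ord_dvd_card_subgroup[OF H(1) h(1)] H ord_eq_1[OF hG] h by simp_all
  then have "ord h = p"
    using p unfolding prime_nat_iff by auto
  with hG show thesis
    by (rule that)
qed

lemma cyclic_of_ord_eq_order:
  assumes "finite (carrier G)" and g: "g \<in> carrier G" and "ord g = order G"
  shows "cyclic_group G"
proof -
  have "card (generate G {g}) = card (carrier G)"
    using generate_pow_card[OF g] \<open>ord g = order G\<close> unfolding order_def by simp
  then have "generate G {g} = carrier G"
    using card_subset_eq[OF \<open>finite (carrier G)\<close> generate_incl[of "{g}"]] g by simp
  moreover have "generate G {g} = range (\<lambda>i::int. g [^] i)"
    unfolding generate_pow[OF g] by blast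
  ultimately have "carrier G = range (\<lambda>i::int. g [^] i)"
    by simp
  then show ?thesis
    using cyclic_group g by blast
qed

lemma prime_square_subgroup_cases:
  assumes "finite (carrier G)" and P: "subgroup P G" "card P = p ^ 2" and p: "Factorial_Ring.prime p"
  obtains (cyclic) w where "w \<in> carrier G" "ord w = p ^ 2"
  | (incomparable) x x' where "x \<in> carrier G" "x' \<in> carrier G" "ord x = p" "ord x' = p"
      "\<not> power_of G x x'" "\<not> power_of G x' x"
proof (cases "\<exists>w \<in> P. ord w = p ^ 2")
  case True
  then show thesis
    using cyclic subgroup.mem_carrier[OF P(1)] by blast
next
  case False
  have PG: "h \<in> carrier G" if "h \<in> P" for h
    using subgroup.mem_carrier[OF P(1) that] .
  have ord_p: "ord h = p" if "h \<in> P" "h \<noteq> \<one>" for h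
  proof -
    obtain i where "i \<le> 2" "ord h = p ^ i"
      using ord_dvd_card_subgroup[OF P(1) \<open>h \<in> P\<close>] P(2) divides_primepow_nat[OF p] by auto
    moreover have "ord h \<noteq> 1" and "ord h \<noteq> p ^ 2"
      using ord_eq_1[OF PG] that False by auto
    moreover have "i = 0 \<or> i = 1 \<or> i = 2"
      using \<open>i \<le> 2\<close> by arith
    ultimately show ?thesis
      by (elim disjE) simp_all
  qed
  have "1 < card P"
    using P(2) less_1_mult[OF prime_gt_1_nat[OF p] prime_gt_1_nat[OF p]] by (simp add: power2_eq_square)
  then obtain x where x: "x \<in> P" "x \<noteq> \<one>"
    by (rule card_gt_1_obtains_other)
  have "\<not> P \<subseteq> generate G {x}"
  proof
    assume "P \<subseteq> generate G {x}"
    then have "card P \<le> card (generate G {x})"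
      using finite_subset[OF generate_incl \<open>finite (carrier G)\<close>] PG[OF x(1)] card_mono by blast
    also have "\<dots> = p"
      using generate_pow_card[OF PG[OF x(1)]] ord_p[OF x] by simp
    finally show False
      using P(2) prime_gt_1_nat[OF p] by (simp add: power2_eq_square)
  qed
  then obtain x' where x': "x' \<in> P" "x' \<notin> generate G {x}"
    by blast
  then have "x' \<noteq> \<one>"
    using generate.one by blast
  have "\<not> power_of G x' x"
    using x' generate_pow[OF PG[OF x(1)]] unfolding power_of_def by blast
  moreover have "\<not> power_of G x x'"
  proof
    assume "power_of G x x'"
    then have "power_of G x' x"
      using power_of_sym_of_ord_eq[OF \<open>finite (carrier G)\<close> PG[OF x(1)] PG[OF x'(1)]]
        ord_p[OF x] ord_p[OF x'(1) \<open>x' \<noteq> \<one>\<close>] by simp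
    with \<open>\<not> power_of G x' x\<close> show False ..
  qed
  ultimately show thesis
    using incomparable[OF PG[OF x(1)] PG[OF x'(1)] ord_p[OF x] ord_p[OF x'(1) \<open>x' \<noteq> \<one>\<close>]] by blast
qed

lemma nilpotent_prime_product_cyclic:
  assumes "nilpotent_group G" and "finite (carrier G)"
    and p: "Factorial_Ring.prime p" and q: "Factorial_Ring.prime q" and "p \<noteq> q"
    and order: "order G = p * q"
  shows "cyclic_group G"
proof -
  obtain x y where x: "x \<in> carrier G" "ord x = p" and y: "y \<in> carrier G" "ord y = q"
    using exists_ord_eq_prime[OF \<open>finite (carrier G)\<close>] p q order by (metis dvd_triv_left dvd_triv_right)
  have cop: "coprime (ord x) (ord y)"
    using x y p q \<open>p \<noteq> q\<close> by (simp add: primes_coprime)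
  then have "ord (x \<otimes> y) = order G"
    using ord_mult_of_coprime[OF x(1) y(1) nilpotent_coprime_commute[OF assms(1) x(1) y(1) cop] cop]
      x y order by simp
  then show ?thesis
    using cyclic_of_ord_eq_order[OF \<open>finite (carrier G)\<close> m_closed[OF x(1) y(1)]] by simp
qed

lemma nilpotent_three_primes_not_cograph:
  assumes "nilpotent_group G" and "finite (carrier G)"
    and p: "Factorial_Ring.prime p" and q: "Factorial_Ring.prime q" and r: "Factorial_Ring.prime r"
    and "p \<noteq> q" "p \<noteq> r" "q \<noteq> r" and "p dvd order G" "q dvd order G" "r dvd order G"
  shows "\<not> power_graph_is_cograph G"
proof -
  obtain x y z where x: "x \<in> carrier G" "ord x = p" and y: "y \<in> carrier G" "ord y = q"
    and z: "z \<in> carrier G" "ord z = r"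
    using exists_ord_eq_prime[OF \<open>finite (carrier G)\<close>] assms by metis
  have "x \<otimes> y = y \<otimes> x" and "y \<otimes> z = z \<otimes> y"
    using nilpotent_coprime_commute[OF assms(1)] x y z p q r \<open>p \<noteq> q\<close> \<open>q \<noteq> r\<close>
    by (simp_all add: primes_coprime)
  then show ?thesis
    using three_primes_power_graph_not_cograph[OF x y z p q r] assms by simp
qed

lemma nilpotent_prime_square_not_cograph:
  assumes nil: "nilpotent_group G" and fin: "finite (carrier G)"
    and p: "Factorial_Ring.prime p" and q: "Factorial_Ring.prime q" and "p \<noteq> q"
    and "p ^ 2 dvd order G" and "q dvd order G"
  shows "\<not> power_graph_is_cograph G"
proof -
  obtain m where "order G = p ^ 2 * m"
    using \<open>p ^ 2 dvd order G\<close> by (auto elim: dvdE)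
  from sylow_thm[OF p is_group this fin] obtain P where P: "subgroup P G" "card P = p ^ 2"
    by blast
  obtain y where y: "y \<in> carrier G" "ord y = q"
    using exists_ord_eq_prime[OF fin q \<open>q dvd order G\<close>] by blast
  have commutes: "u \<otimes> y = y \<otimes> u" if "u \<in> carrier G" "ord u = p ^ k" for u k
    using nilpotent_coprime_commute[OF nil that(1) y(1)] that y p q \<open>p \<noteq> q\<close>
    by (simp add: primes_coprime coprime_power_left_iff)
  from fin P p show ?thesis
  proof (cases rule: prime_square_subgroup_cases)
    case (cyclic w)
    have "ord (w [^] p) = p ^ 1"
      using ord_pow[OF cyclic(1), of p] cyclic(2) prime_gt_0_nat[OF p] by (simp add: power2_eq_square)
    then show ?thesis
      using prime_square_power_graph_not_cograph[OF cyclic y p q \<open>p \<noteq> q\<close>]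
        commutes[OF nat_pow_closed[OF cyclic(1)]] by blast
  next
    case (incomparable x x')
    then show ?thesis
      using incomparable_pair_power_graph_not_cograph[of x p x' y q] commutes[of _ 1] y p q \<open>p \<noteq> q\<close>
      by simp
  qed
qed

lemma nilpotent_cograph_not_prime_power:
  assumes "nilpotent_group G" and "finite (carrier G)" and cograph: "power_graph_is_cograph G"
    and "\<not> (\<exists>p k. Factorial_Ring.prime p \<and> order G = p ^ k)"
  shows "\<exists>p q. Factorial_Ring.prime p \<and> Factorial_Ring.prime q \<and> p \<noteq> q \<and> order G = p * q
    \<and> cyclic_group G"
proof -
  have "order G > 0"
    using assms(2) order_gt_0_iff_finite by blast
  from this assms(4) show ?thesis
  proof (cases rule: not_prime_power_cases)
    case (product p q)
    then show ?thesis
      using nilpotent_prime_product_cyclic[OF assms(1,2) product] by blast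
  next
    case (three_primes p q r)
    show ?thesis
      using nilpotent_three_primes_not_cograph[OF assms(1,2) three_primes] cograph by contradiction
  next
    case (square p q)
    show ?thesis
      using nilpotent_prime_square_not_cograph[OF assms(1,2) square] cograph by contradiction
  qed
qed

end

theorem mainTheorem5:
  fixes G :: "('a, 'b) monoid_scheme"
  assumes "nilpotent_group G" and "finite (carrier G)"
  shows "power_graph_is_cograph G \<longleftrightarrow>
           ((\<exists>p k. Factorial_Ring.prime (p::nat) \<and> order G = p ^ k) \<or>
            (\<exists>p q. Factorial_Ring.prime (p::nat) \<and> Factorial_Ring.prime q \<and> p \<noteq> q \<and> order G = p * q \<and> cyclic_group G))"
proof -
  interpret group G
    using assms(1) unfolding nilpotent_group_def by blast
  show ?thesis
    using nilpotent_cograph_not_prime_power[OF assms]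
      prime_power_order_power_graph_cograph cyclic_prime_product_power_graph_cograph
    by auto
qed

end
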